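(* Let $p\ge0$, $(\kappa_i)$ with $C^{-1}i^{-p}\le\kappa_i\le Ci^{-p}$, $\mu_0\in\ell_2$, and constants $0<l<L$. Define \[ h_n(\alpha)=\frac{1+2\alpha+2p}{n^{1/(1+2\alpha+2p)}\log n}\sum_{i=1}^{\infty}\frac{n^2 i^{1+2\alpha}\mu_{0,i}^2\log i}{(i^{1+2\alpha}\kappa_i^{-2}+n)^2}, \] $\underline{\alpha}_n=\inf\{\alpha>0:h_n(\alpha)>l\}\wedge\sqrt{\log n}$ and $\overline{\alpha}_n=\inf\{\alpha>0:h_n(\alpha)>L(\log n)^2\}$. Then, with constants not depending on $n$, $\alpha$ or $\mu_0$, \[ h_n(\alpha)\gtrsim h_n(\overline{\alpha}_n)\quad\text{for }\alpha\in\Big[\overline{\alpha}_n-\frac1{\log n},\overline{\alpha}_n\Big]\text{ and }n\ge e^4, \] \[ h_n(\alpha)\lesssim h_n(\underline{\alpha}_n)\quad\text{for }\alpha\in\Big[\underline{\alpha}_n,\underline{\alpha}_n+\frac1{\log n}\Big]\text{ and }n\ge e^2. \]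
   Context: $a\lesssim b$ means $a\le Kb$ for a constant $K>0$; $a\gtrsim b$ means $b\lesssim a$. Infimum of the empty set is $+\infty$. *)

theory Defs
  imports "HOL-Analysis.Analysis"
begin

text \<open>Sequences are indexed from 1; the value at index 0 is ignored.
  h_n(alpha) for the parameter p, the sequence kappa, the sequence mu0 and sample size n.\<close>
definition hfun :: "real \<Rightarrow> (nat \<Rightarrow> real) \<Rightarrow> (nat \<Rightarrow> real) \<Rightarrow> nat \<Rightarrow> real \<Rightarrow> real" where
  "hfun p \<kappa> \<mu> n \<alpha> =
     (1 + 2*\<alpha> + 2*p) / (real n powr (1 / (1 + 2*\<alpha> + 2*p)) * ln (real n)) *
     (\<Sum>j. let i = Suc j in
        (real n)^2 * real i powr (1 + 2*\<alpha>) * (\<mu> i)^2 * ln (real i)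
        / (real i powr (1 + 2*\<alpha>) / (\<kappa> i)^2 + real n)^2)"

text \<open>Upper threshold: inf{alpha>0 : h_n(alpha) > L (log n)^2}, infimum of empty set = +infinity.\<close>
definition alpha_up :: "real \<Rightarrow> (nat \<Rightarrow> real) \<Rightarrow> (nat \<Rightarrow> real) \<Rightarrow> real \<Rightarrow> nat \<Rightarrow> ereal" where
  "alpha_up p \<kappa> \<mu> L n =
     Inf {ereal \<alpha> | \<alpha>. \<alpha> > 0 \<and> hfun p \<kappa> \<mu> n \<alpha> > L * (ln (real n))^2}"

definition alpha_low :: "real \<Rightarrow> (nat \<Rightarrow> real) \<Rightarrow> (nat \<Rightarrow> real) \<Rightarrow> real \<Rightarrow> nat \<Rightarrow> ereal" where
  "alpha_low p \<kappa> \<mu> l n =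
     min (Inf {ereal \<alpha> | \<alpha>. \<alpha> > 0 \<and> hfun p \<kappa> \<mu> n \<alpha> > l})
         (ereal (sqrt (ln (real n))))"

end

theory Submission
  imports Defs
begin

text \<open>Everything rests on a local comparison: if \<open>\<gamma> \<ge> -1/4\<close> and
  \<open>\<gamma> \<le> \<beta> \<le> \<gamma> + 1/log n\<close>, then \<open>h\<^sub>n(\<beta>) \<le> K h\<^sub>n(\<gamma>)\<close> with \<open>K\<close> depending only on \<open>C\<close>.
  Moving the exponent by at most \<open>1/log n\<close> changes \<open>n\<^bsup>1/(1+2\<alpha>+2p)\<^esup>\<close> by a factor at most
  \<open>e\<^sup>8\<close>. In the series, the \<open>i\<close>-th term is \<open>x/(xA+n)\<^sup>2\<close> up to factors independent of \<open>\<alpha>\<close>,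
  with \<open>x = i\<^bsup>1+2\<alpha>\<^esup>\<close> and \<open>A = \<kappa>\<^sub>i\<^sup>-\<^sup>2\<close>, and raising \<open>\<alpha>\<close> from \<open>\<gamma>\<close> to \<open>\<beta>\<close> multiplies \<open>x\<close>
  by \<open>t = i\<^bsup>2(\<beta>-\<gamma>)\<^esup>\<close>. When \<open>xA \<ge> n\<close> the term grows by at most a factor 4; when \<open>xA < n\<close>
  the index is at most polynomial in \<open>n\<close>, so \<open>t = exp(2(\<beta>-\<gamma>) log i)\<close> is bounded.
  Both thresholds are nonnegative and, when finite, the intervals in question are
  intervals \<open>[\<gamma>, \<gamma> + 1/log n]\<close> with \<open>\<gamma> \<ge> -1/4\<close>.\<close>

definition hterm :: "(nat \<Rightarrow> real) \<Rightarrow> (nat \<Rightarrow> real) \<Rightarrow> nat \<Rightarrow> real \<Rightarrow> nat \<Rightarrow> real" where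
  "hterm \<kappa> \<mu> n \<alpha> i = (real n)^2 * real i powr (1+2*\<alpha>) * (\<mu> i)^2 * ln (real i)
     / (real i powr (1+2*\<alpha>) / (\<kappa> i)^2 + real n)^2"

lemma hfun_eq_suminf_hterm:
  "hfun p \<kappa> \<mu> n \<alpha> = (1+2*\<alpha>+2*p) / (real n powr (1/(1+2*\<alpha>+2*p)) * ln (real n))
     * (\<Sum>j. hterm \<kappa> \<mu> n \<alpha> (Suc j))"
  by (simp add: hfun_def hterm_def Let_def)

lemma powr_neg_bounds_imp_pos_le:
  fixes i k p C :: real
  assumes "inverse C * i powr (-p) \<le> k" "k \<le> C * i powr (-p)" "i \<ge> 1" "p \<ge> 0" "C > 0"
  shows "0 < k \<and> k \<le> C"
proof -
  have "i powr (-p) \<le> 1"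
    using assms by (simp add: powr_minus ge_one_powr_ge_zero inverse_le_1_iff)
  moreover have "i powr (-p) > 0" using assms by simp
  ultimately show ?thesis
    using assms by (smt (verit) mult_left_le mult_pos_pos positive_imp_inverse_positive)
qed

lemma hterm_nonneg: "hterm \<kappa> \<mu> n \<alpha> i \<ge> 0"
  by (cases "i = 0") (auto simp: hterm_def)

lemma hterm_le:
  assumes "\<alpha> \<ge> -1/4" "i \<ge> 1" "0 < \<kappa> i" "\<kappa> i \<le> C"
  shows "hterm \<kappa> \<mu> n \<alpha> i \<le> 2 * C^4 * (real n)^2 * (\<mu> i)^2"
proof -
  define x where "x = real i powr (1+2*\<alpha>)"
  define k where "k = (\<kappa> i)^2"
  define L where "L = ln (real i)"
  have x0: "x > 0" and k0: "k > 0" and L0: "L \<ge> 0"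
    using assms by (simp_all add: x_def k_def L_def)
  have "k^2 \<le> (C^2)^2"
    unfolding k_def using assms by (intro power_mono) auto
  hence kC: "k^2 \<le> C^4" by simp
  have "L \<le> real i powr (1/2) / (1/2)"
    unfolding L_def using assms by (intro ln_powr_bound) auto
  also have "\<dots> \<le> 2 * x"
    unfolding x_def using assms by (simp add: powr_mono)
  finally have Lx: "L / x \<le> 2" using x0 by (simp add: divide_simps)
  have "x * L / (x/k + real n)^2 \<le> x * L / (x/k)^2"
    using x0 k0 L0 by (intro divide_left_mono power_mono mult_pos_pos zero_less_power add_pos_nonneg)
      auto
  also have "\<dots> = k^2 * (L / x)" using x0 k0 by (simp add: power2_eq_square field_simps)
  also have "\<dots> \<le> C^4 * 2" using kC Lx L0 x0 by (intro mult_mono) auto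
  finally have "x * L / (x/k + real n)^2 \<le> 2 * C^4" by simp
  hence "(real n)^2 * (\<mu> i)^2 * (x * L / (x/k + real n)^2) \<le> (real n)^2 * (\<mu> i)^2 * (2 * C^4)"
    by (intro mult_left_mono) auto
  thus ?thesis by (simp add: hterm_def x_def k_def L_def mult_ac)
qed

lemma summable_hterm:
  assumes "\<alpha> \<ge> -1/4" "\<And>i. i \<ge> 1 \<Longrightarrow> 0 < \<kappa> i \<and> \<kappa> i \<le> C"
    and "summable (\<lambda>j. (\<mu> (Suc j))^2)"
  shows "summable (\<lambda>j. hterm \<kappa> \<mu> n \<alpha> (Suc j))"
proof (rule summable_comparison_test)
  show "summable (\<lambda>j. 2 * C^4 * (real n)^2 * (\<mu> (Suc j))^2)"
    using assms(3) by (intro summable_mult)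
  show "\<exists>N. \<forall>j\<ge>N. norm (hterm \<kappa> \<mu> n \<alpha> (Suc j)) \<le> 2 * C^4 * (real n)^2 * (\<mu> (Suc j))^2"
    using hterm_le[OF assms(1)] assms(2) hterm_nonneg by auto
qed

text \<open>The case split behind the series comparison: \<open>y \<mapsto> y/(yA+N)\<^sup>2\<close> increases only
  while \<open>yA < N\<close>, and beyond that point it decays at least like \<open>1/y\<close>.\<close>

lemma scaled_ratio_le:
  fixes x A N t T :: real
  assumes "x > 0" "A > 0" "N > 0" "t \<ge> 1" "x*A < N \<Longrightarrow> t \<le> T" "T \<ge> 4"
  shows "t*x/(t*x*A+N)^2 \<le> T*(x/(x*A+N)^2)"
proof -
  have pos: "0 < t*x*A" "0 < x*A" using assms by auto
  have "t*x*(x*A+N)^2 \<le> T*x*(t*x*A+N)^2"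
  proof (cases "x*A < N")
    case True
    have "(x*A+N)^2 \<le> (t*x*A+N)^2"
      using assms pos by (intro power_mono) (auto simp: mult_right_mono)
    hence "t*x*(x*A+N)^2 \<le> t*x*(t*x*A+N)^2" using assms by simp
    also have "\<dots> \<le> T*x*(t*x*A+N)^2" using assms True by (intro mult_right_mono) auto
    finally show ?thesis .
  next
    case False
    have "(x*A+N)^2 \<le> (2*(x*A))^2" using False assms by (intro power_mono) (auto simp: mult.commute)
    hence "t*x*(x*A+N)^2 \<le> 4*x*(t*(x*A)^2)" using assms by (simp add: power2_eq_square)
    also have "\<dots> \<le> 4*x*(t*x*A)^2"
      using assms mult_right_mono[of t "t*t" "(x*A)^2"] by (simp add: power2_eq_square mult_ac)
    also have "\<dots> \<le> T*x*(t*x*A+N)^2"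
      using assms pos by (intro mult_mono power_mono) auto
    finally show ?thesis .
  qed
  moreover have "t*x*A+N > 0" "x*A+N > 0" using pos assms(3) by linarith+
  hence "(t*x*A+N)^2 > 0" "(x*A+N)^2 > 0" by simp_all
  ultimately show ?thesis by (simp add: divide_simps mult_ac)
qed

lemma powr_exponent_gap_le:
  fixes i n C \<beta> \<gamma> :: real
  assumes "i \<ge> 1" "C > 0" "ln n \<ge> 2" "\<gamma> \<ge> -1/4" "\<gamma> \<le> \<beta>" "\<beta> \<le> \<gamma> + 1/ln n"
    and small: "i powr (1+2*\<gamma>) < C^2 * n"
  shows "i powr (2*(\<beta>-\<gamma>)) \<le> exp (4 + 4*\<bar>ln C\<bar>)"
proof -
  have "0 < C^2 * n" using small assms(1) by (smt (verit) powr_gt_zero)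
  hence n0: "n > 0" using assms(2) by (simp add: zero_less_mult_iff)
  have "i powr (1/2) \<le> i powr (1+2*\<gamma>)" using assms by (intro powr_mono) auto
  hence "ln (i powr (1/2)) < ln (C^2 * n)"
    using small assms n0 by (subst ln_less_cancel_iff) auto
  hence "ln i / 2 < ln (C^2 * n)" using assms by (simp add: ln_powr)
  hence Li: "ln i \<le> 2 * (2 * ln C + ln n)" using assms n0 by (simp add: ln_mult ln_realpow)
  have "2*(\<beta>-\<gamma>) * ln i \<le> (2 / ln n) * ln i"
    using assms by (intro mult_right_mono) auto
  also have "\<dots> \<le> (2 / ln n) * (2 * (2 * ln C + ln n))"
    using Li assms by (intro mult_left_mono) auto
  also have "\<dots> = 4 + 8 * ln C / ln n" using assms by (simp add: field_simps)
  also have "\<dots> \<le> 4 + 4*\<bar>ln C\<bar>"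
  proof -
    have "8 * ln C / ln n \<le> 8 * \<bar>ln C\<bar> / ln n" using assms by (intro divide_right_mono) auto
    also have "\<dots> \<le> 8 * \<bar>ln C\<bar> / 2" using assms by (intro divide_left_mono) auto
    finally show ?thesis by simp
  qed
  finally show ?thesis using assms by (simp add: powr_def)
qed

lemma hterm_shift_le:
  assumes "ln (real n) \<ge> 2" "\<gamma> \<ge> -1/4" "\<gamma> \<le> \<beta>" "\<beta> \<le> \<gamma> + 1/ln (real n)"
    and "i \<ge> 1" "0 < \<kappa> i" "\<kappa> i \<le> C"
  shows "hterm \<kappa> \<mu> n \<beta> i \<le> exp (4 + 4*\<bar>ln C\<bar>) * hterm \<kappa> \<mu> n \<gamma> i"
proof -
  define x where "x = real i powr (1+2*\<gamma>)"
  define t where "t = real i powr (2*(\<beta>-\<gamma>))"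
  define A where "A = 1 / (\<kappa> i)^2"
  define c where "c = (real n)^2 * (\<mu> i)^2 * ln (real i)"
  have x0: "x > 0" and A0: "A > 0" and c0: "c \<ge> 0"
    using assms by (auto simp: x_def A_def c_def)
  have n0: "real n > 0" using assms(1) by (cases "n = 0") auto
  have "real i powr (1+2*\<beta>) = t*x"
    unfolding t_def x_def by (simp add: powr_add[symmetric] algebra_simps)
  hence hterm_\<beta>: "hterm \<kappa> \<mu> n \<beta> i = c * (t*x/(t*x*A+real n)^2)"
    by (simp add: hterm_def A_def c_def mult_ac)
  have hterm_\<gamma>: "hterm \<kappa> \<mu> n \<gamma> i = c * (x/(x*A+real n)^2)"
    by (simp add: hterm_def x_def A_def c_def mult_ac)
  have "t \<le> exp (4 + 4*\<bar>ln C\<bar>)" if "x*A < real n"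
  proof -
    have "(\<kappa> i)^2 \<le> C^2" using assms by (intro power_mono) auto
    hence "x / C^2 \<le> x*A"
      unfolding A_def using x0 assms(6) by (simp add: divide_simps mult_left_mono)
    hence "x / C^2 < real n" using that by linarith
    hence "real i powr (1+2*\<gamma>) < C^2 * real n"
      using assms(6,7) by (simp add: x_def divide_less_eq mult.commute)
    thus ?thesis unfolding t_def using assms by (intro powr_exponent_gap_le) auto
  qed
  moreover have "t \<ge> 1" unfolding t_def using assms by (intro ge_one_powr_ge_zero) auto
  moreover have "exp (4 + 4*\<bar>ln C\<bar>) \<ge> (4::real)"
    using exp_ge_add_one_self[of "4 + 4*\<bar>ln C\<bar>"] by linarith
  ultimately have "t*x/(t*x*A+real n)^2 \<le> exp (4 + 4*\<bar>ln C\<bar>) * (x/(x*A+real n)^2)"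
    using x0 A0 n0 by (intro scaled_ratio_le) auto
  hence "c * (t*x/(t*x*A+real n)^2) \<le> c * (exp (4 + 4*\<bar>ln C\<bar>) * (x/(x*A+real n)^2))"
    using c0 by (rule mult_left_mono)
  thus ?thesis unfolding hterm_\<beta> hterm_\<gamma> by (simp only: mult.left_commute)
qed

lemma prefactor_shift_le:
  fixes N q r :: real
  assumes "ln N \<ge> 2" "N > 0" "q \<ge> 1/2" "q \<le> r" "r \<le> q + 2/ln N"
  shows "r / (N powr (1/r) * ln N) \<le> 3 * exp 8 * (q / (N powr (1/q) * ln N))"
proof -
  have "1/q - 1/r = (r - q)/(q*r)" using assms by (simp add: field_simps)
  also have "\<dots> \<le> (r - q)/(1/4)"
    using assms mult_mono[of "1/2" q "1/2" r] by (intro divide_left_mono) auto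
  also have "\<dots> \<le> 8/ln N" using assms by simp
  finally have "(1/q - 1/r) * ln N \<le> 8/ln N * ln N"
    by (rule mult_right_mono) (use assms(1) in linarith)
  moreover have "ln N \<noteq> 0" using assms(1) by linarith
  ultimately have "(1/q - 1/r) * ln N \<le> 8" by simp
  hence "N powr (1/q - 1/r) \<le> exp 8" using assms by (simp add: powr_def mult.commute)
  hence "N powr (1/q) \<le> exp 8 * N powr (1/r)"
    using assms by (simp add: powr_diff divide_le_eq mult.commute)
  moreover have "2/ln N \<le> 1" using assms(1) by simp
  hence "r \<le> 3*q" using assms by linarith
  ultimately have "r * N powr (1/q) \<le> (3*q) * (exp 8 * N powr (1/r))"
    using assms by (intro mult_mono) auto
  moreover have "ln N > 0" using assms(1) by linarith
  ultimately show ?thesis using assms(2) by (simp add: divide_simps mult_ac)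
qed

context
  fixes p C :: real and \<kappa> \<mu> :: "nat \<Rightarrow> real"
  assumes p: "p \<ge> 0"
    and \<kappa>: "\<And>i. i \<ge> 1 \<Longrightarrow> 0 < \<kappa> i \<and> \<kappa> i \<le> C"
    and \<mu>: "summable (\<lambda>j. (\<mu> (Suc j))^2)"
begin

lemma hfun_shift_le:
  assumes n: "ln (real n) \<ge> 2" and "\<gamma> \<ge> -1/4" "\<gamma> \<le> \<beta>" "\<beta> \<le> \<gamma> + 1/ln (real n)"
  shows "hfun p \<kappa> \<mu> n \<beta> \<le> 3 * exp 8 * exp (4 + 4*\<bar>ln C\<bar>) * hfun p \<kappa> \<mu> n \<gamma>"
proof -
  define T where "T = exp (4 + 4*\<bar>ln C\<bar>)"
  define P where "P a = (1+2*a+2*p) / (real n powr (1/(1+2*a+2*p)) * ln (real n))" for a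
  define S where "S a = (\<Sum>j. hterm \<kappa> \<mu> n a (Suc j))" for a
  have n0: "real n > 0" using n by (cases "n = 0") auto
  have sums: "summable (\<lambda>j. hterm \<kappa> \<mu> n a (Suc j))" if "a \<ge> \<gamma>" for a
    using that assms \<kappa> \<mu> by (intro summable_hterm) auto
  have "S \<beta> \<le> (\<Sum>j. T * hterm \<kappa> \<mu> n \<gamma> (Suc j))"
    unfolding S_def T_def using sums assms \<kappa>
    by (intro suminf_le summable_mult hterm_shift_le) auto
  also have "\<dots> = T * S \<gamma>" unfolding S_def using sums by (intro suminf_mult) auto
  finally have S_le: "S \<beta> \<le> T * S \<gamma>" .
  have P_le: "P \<beta> \<le> 3 * exp 8 * P \<gamma>"
    unfolding P_def using assms p n0 by (intro prefactor_shift_le) auto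
  have "ln (real n) > 0" using n by linarith
  hence "P \<gamma> \<ge> 0" unfolding P_def using assms p n0 by (intro divide_nonneg_pos mult_pos_pos) auto
  moreover have "S \<beta> \<ge> 0" unfolding S_def using sums assms hterm_nonneg by (intro suminf_nonneg) auto
  ultimately have "P \<beta> * S \<beta> \<le> (3 * exp 8 * P \<gamma>) * (T * S \<gamma>)"
    using P_le S_le by (intro mult_mono) auto
  thus ?thesis by (simp add: hfun_eq_suminf_hterm P_def S_def T_def mult_ac)
qed

lemma hfun_at_upper_end_le:
  assumes "ln (real n) \<ge> 4" "U \<ge> 0" "ereal \<alpha> \<in> {U - ereal (1/ln (real n)) .. U}"
  shows "hfun p \<kappa> \<mu> n (real_of_ereal U) \<le> 3 * exp 8 * exp (4 + 4*\<bar>ln C\<bar>) * hfun p \<kappa> \<mu> n \<alpha>"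
proof (cases U)
  case (real u)
  have "1/ln (real n) \<le> 1/4" using assms(1) by (simp add: divide_simps)
  moreover have "u - 1/ln (real n) \<le> \<alpha>" "\<alpha> \<le> u" using assms(3) real by auto
  moreover have "u \<ge> 0" using assms(2) real by simp
  ultimately have "\<alpha> \<ge> -1/4" by linarith
  hence "hfun p \<kappa> \<mu> n u \<le> 3 * exp 8 * exp (4 + 4*\<bar>ln C\<bar>) * hfun p \<kappa> \<mu> n \<alpha>"
    using assms(1) \<open>u - 1/ln (real n) \<le> \<alpha>\<close> \<open>\<alpha> \<le> u\<close> by (intro hfun_shift_le) auto
  thus ?thesis using real by simp
qed (use assms in auto)

lemma hfun_at_lower_end_ge:
  assumes "ln (real n) \<ge> 2" "U \<ge> 0" "U \<noteq> \<infinity>" "ereal \<alpha> \<in> {U .. U + ereal (1/ln (real n))}"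
  shows "hfun p \<kappa> \<mu> n \<alpha> \<le> 3 * exp 8 * exp (4 + 4*\<bar>ln C\<bar>) * hfun p \<kappa> \<mu> n (real_of_ereal U)"
  using assms by (cases U) (auto intro!: hfun_shift_le)

end

lemma alpha_up_nonneg: "alpha_up p \<kappa> \<mu> L n \<ge> 0"
  unfolding alpha_up_def by (rule Inf_greatest) auto

lemma alpha_low_nonneg: "ln (real n) \<ge> 0 \<Longrightarrow> alpha_low p \<kappa> \<mu> l n \<ge> 0"
  unfolding alpha_low_def by (auto intro: Inf_greatest)

lemma alpha_low_finite: "alpha_low p \<kappa> \<mu> l n \<noteq> \<infinity>"
  unfolding alpha_low_def by (auto simp: min_def)

theorem lemma5p1:
  fixes p C l L :: real and \<kappa> :: "nat \<Rightarrow> real"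
  assumes "p \<ge> 0" and "C > 0"
    and "\<And>i. i \<ge> 1 \<Longrightarrow> inverse C * real i powr (-p) \<le> \<kappa> i \<and> \<kappa> i \<le> C * real i powr (-p)"
    and "0 < l" and "l < L"
  shows "\<exists>K>0. \<forall>\<mu> :: nat \<Rightarrow> real. summable (\<lambda>j. (\<mu> (Suc j))^2) \<longrightarrow>
     (\<forall>n::nat. \<forall>\<alpha>::real. real n \<ge> exp 4 \<and>
        ereal \<alpha> \<in> {alpha_up p \<kappa> \<mu> L n - ereal (1 / ln (real n)) .. alpha_up p \<kappa> \<mu> L n} \<longrightarrow>
        hfun p \<kappa> \<mu> n (real_of_ereal (alpha_up p \<kappa> \<mu> L n)) \<le> K * hfun p \<kappa> \<mu> n \<alpha>) \<and>
     (\<forall>n::nat. \<forall>\<alpha>::real. real n \<ge> exp 2 \<and>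
        ereal \<alpha> \<in> {alpha_low p \<kappa> \<mu> l n .. alpha_low p \<kappa> \<mu> l n + ereal (1 / ln (real n))} \<longrightarrow>
        hfun p \<kappa> \<mu> n \<alpha> \<le> K * hfun p \<kappa> \<mu> n (real_of_ereal (alpha_low p \<kappa> \<mu> l n)))"
proof -
  have \<kappa>: "0 < \<kappa> i \<and> \<kappa> i \<le> C" if "i \<ge> 1" for i
    using assms(1,2) assms(3)[OF that] that by (intro powr_neg_bounds_imp_pos_le) auto
  have ln_ge: "ln (real n) \<ge> c" if "real n \<ge> exp c" for n :: nat and c :: real
    using that ln_ge_iff[of "real n" c] exp_gt_zero[of c] by linarith
  define K where "K = 3 * exp 8 * exp (4 + 4*\<bar>ln C\<bar>)"
  show ?thesis
  proof (intro exI[of _ K] conjI allI impI)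
    show "K > 0" unfolding K_def by simp
  next
    fix \<mu> :: "nat \<Rightarrow> real" and n \<alpha>
    assume \<mu>: "summable (\<lambda>j. (\<mu> (Suc j))^2)"
      and n: "real n \<ge> exp 4 \<and> ereal \<alpha> \<in> {alpha_up p \<kappa> \<mu> L n - ereal (1 / ln (real n)) .. alpha_up p \<kappa> \<mu> L n}"
    have "ln (real n) \<ge> 4" using n ln_ge by blast
    then show "hfun p \<kappa> \<mu> n (real_of_ereal (alpha_up p \<kappa> \<mu> L n)) \<le> K * hfun p \<kappa> \<mu> n \<alpha>"
      unfolding K_def using \<kappa> \<mu> n by (intro hfun_at_upper_end_le assms(1) alpha_up_nonneg) auto
  next
    fix \<mu> :: "nat \<Rightarrow> real" and n \<alpha>
    assume \<mu>: "summable (\<lambda>j. (\<mu> (Suc j))^2)"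
      and n: "real n \<ge> exp 2 \<and> ereal \<alpha> \<in> {alpha_low p \<kappa> \<mu> l n .. alpha_low p \<kappa> \<mu> l n + ereal (1 / ln (real n))}"
    have "ln (real n) \<ge> 2" using n ln_ge by blast
    then show "hfun p \<kappa> \<mu> n \<alpha> \<le> K * hfun p \<kappa> \<mu> n (real_of_ereal (alpha_low p \<kappa> \<mu> l n))"
      unfolding K_def using \<kappa> \<mu> n
      by (intro hfun_at_lower_end_ge assms(1) alpha_low_nonneg alpha_low_finite) auto
  qed
qed

end
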